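(* Let $G$ be a finite group and $p$ a prime such that the Sylow $p$-subgroups of $G$ are not normal. Then the set $G_p$ of $p$-elements of $G$ cannot be covered by (is not contained in the union of) $p$ Sylow $p$-subgroups of $G$. In particular, if $\nu_p(G)=p+1$, then $G$ does not have a redundant Sylow $p$-subgroup.
   Context: $\mathrm{Syl}_p(G)$ denotes the set of Sylow $p$-subgroups of $G$ and $\nu_p(G)=|\mathrm{Syl}_p(G)|$. $G$ is said to have a redundant Sylow $p$-subgroup if $G_p$ is contained in the union of the members of some proper subset of $\mathrm{Syl}_p(G)$. *)

theory Defs
  imports "HOL-Algebra.Algebra"
begin

definition Syl :: "('a, 'b) monoid_scheme \<Rightarrow> nat \<Rightarrow> 'a set set" where
  "Syl G p = {P. subgroup P G \<and> card P = p ^ multiplicity p (order G)}"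

definition nu :: "('a, 'b) monoid_scheme \<Rightarrow> nat \<Rightarrow> nat" where
  "nu G p = card (Syl G p)"

definition p_elements :: "('a, 'b) monoid_scheme \<Rightarrow> nat \<Rightarrow> 'a set" where
  "p_elements G p = {x \<in> carrier G. \<exists>n::nat. x [^]\<^bsub>G\<^esub> (p ^ n) = \<one>\<^bsub>G\<^esub>}"

definition has_redundant_sylow :: "('a, 'b) monoid_scheme \<Rightarrow> nat \<Rightarrow> bool" where
  "has_redundant_sylow G p = (\<exists>S. S \<subset> Syl G p \<and> p_elements G p \<subseteq> \<Union>S)"

end

theory Submission
  imports Defs
begin

text \<open>A non-normal Sylow \<open>p\<close>-subgroup \<open>P\<close> forces more than \<open>p\<close> Sylow \<open>p\<close>-subgroups:
  \<open>P\<close> acts by conjugation on the others, and an orbit of size less than \<open>p\<close> is a single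
  Sylow subgroup \<open>Q \<noteq> P\<close> normalised by \<open>P\<close>. Then \<open>P\<close> maps to a \<open>p\<close>-subgroup of
  \<open>N\<^sub>G(Q)/Q\<close>, a group of order prime to \<open>p\<close>, so \<open>P \<subseteq> Q\<close>, which is absurd.
  Consequently any \<open>p\<close> Sylow subgroups miss some Sylow subgroup \<open>Q\<close>, and they cannot
  cover its elements: each meets \<open>Q\<close> in at most \<open>|Q|/p\<close> elements, so together they
  contain at most \<open>p (|Q|/p - 1) < |Q| - 1\<close> non-identity elements of \<open>Q\<close>.\<close>

lemma (in group_action) fixed_if_card_orbit_less_prime:
  assumes "Factorial_Ring.prime p" and "order G = p ^ n"
    and "x \<in> E" and "card (orbit G \<phi> x) < p" and "g \<in> carrier G"
  shows "\<phi> g x = x"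
proof -
  have "card (orbit G \<phi> x) dvd p ^ n"
    using orbit_stabilizer_theorem[OF \<open>x \<in> E\<close>] assms(2) by (metis dvd_triv_left)
  then obtain k where k: "card (orbit G \<phi> x) = p ^ k"
    using divides_primepow_nat[OF assms(1)] by blast
  have "k = 0"
  proof (rule ccontr)
    assume "k \<noteq> 0"
    then have "p \<le> p ^ k" using prime_gt_0_nat[OF assms(1)]
      by (simp add: self_le_power)
    with k assms(4) show False by simp
  qed
  with k have "card (orbit G \<phi> x) = 1" by simp
  moreover have "x \<in> orbit G \<phi> x" and "\<phi> g x \<in> orbit G \<phi> x"
    using orbit_refl[OF \<open>x \<in> E\<close>] \<open>g \<in> carrier G\<close> unfolding orbit_def by auto
  ultimately show ?thesis by (metis card_1_singletonE singletonD)
qed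

lemma (in normal) mem_if_pow_eq_one_coprime_index:
  assumes "x \<in> carrier G" and "x [^] n = \<one>"
    and "coprime n (card (rcosets H))"
  shows "x \<in> H"
proof -
  interpret F: group "G Mod H" by (rule factorgroup_is_group)
  have hom: "(#>) H \<in> hom G (G Mod H)" by (rule r_coset_hom_Mod)
  have y: "H #> x \<in> carrier (G Mod H)" using hom \<open>x \<in> carrier G\<close> by (auto simp: hom_def)
  have "(H #> x) [^]\<^bsub>G Mod H\<^esub> n = H #> (x [^] n)"
    using hom_nat_pow[OF hom \<open>x \<in> carrier G\<close>] F.is_group by simp
  also have "\<dots> = \<one>\<^bsub>G Mod H\<^esub>" using \<open>x [^] n = \<one>\<close> coset_mult_one subset by simp
  finally have "F.ord (H #> x) dvd n" using F.pow_eq_id[OF y] by simp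
  moreover have "F.ord (H #> x) dvd card (rcosets H)"
    using F.ord_dvd_group_order[OF y] by (simp add: order_def FactGroup_def)
  ultimately have "F.ord (H #> x) = 1" using \<open>coprime n _\<close> coprime_common_divisor_nat by blast
  then have "H #> x = H" using F.ord_eq_1[OF y] by (simp add: FactGroup_def)
  then show "x \<in> H" using \<open>x \<in> carrier G\<close> rcos_self[OF \<open>x \<in> carrier G\<close> is_subgroup] by simp
qed

context group
begin

lemma pow_card_subgroup_eq_one:
  assumes "subgroup H G" and "x \<in> H"
  shows "x [^] card H = \<one>"
proof -
  interpret H: group "G\<lparr>carrier := H\<rparr>" using subgroup_imp_group[OF assms(1)] .
  show ?thesis
    using H.pow_order_eq_1[of x] assms(2) nat_pow_consistent[of x _ H] by (simp add: order_def)
qed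

lemma card_conj:
  assumes "g \<in> carrier G" and "A \<subseteq> carrier G"
  shows "card (g <# A #> inv g) = card A"
proof -
  have "g <# A #> inv g = (\<lambda>a. g \<otimes> a \<otimes> inv g) ` A"
    using assms unfolding l_coset_def r_coset_def by auto
  moreover have "inj_on (\<lambda>a. g \<otimes> a \<otimes> inv g) A"
    using assms by (auto simp: inj_on_def subset_iff)
  ultimately show ?thesis by (simp add: card_image)
qed

lemma conj_Syl:
  assumes "P \<in> Syl G p" and "g \<in> carrier G"
  shows "g <# P #> inv g \<in> Syl G p"
proof -
  interpret conj: group_action G "{H. subgroup H G}" "\<lambda>g. \<lambda>H \<in> {H. subgroup H G}. g <# H #> inv g"
    by (rule action_by_conjugation_on_subgroups_set)
  have "subgroup P G" and "card P = p ^ multiplicity p (order G)" using assms(1) unfolding Syl_def by auto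
  then show ?thesis
    using conj.element_image[OF assms(2), of P] card_conj[OF assms(2) subgroup.subset]
    unfolding Syl_def by simp
qed

lemma finite_Syl:
  assumes "finite (carrier G)"
  shows "finite (Syl G p)"
proof -
  have "Syl G p \<subseteq> Pow (carrier G)" unfolding Syl_def using subgroup.subset by auto
  then show ?thesis using assms finite_subset by blast
qed

lemma Syl_nonempty:
  assumes "finite (carrier G)" and "Factorial_Ring.prime p"
  shows "Syl G p \<noteq> {}"
proof -
  have "order G = p ^ multiplicity p (order G) * (order G div p ^ multiplicity p (order G))"
    by (simp add: multiplicity_dvd)
  then obtain P where "subgroup P G" and "card P = p ^ multiplicity p (order G)"
    using sylow_thm[OF assms(2) is_group _ assms(1)] by blast
  then show ?thesis unfolding Syl_def by blast
qed

lemma Syl_subset_p_elements: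
  assumes "P \<in> Syl G p"
  shows "P \<subseteq> p_elements G p"
proof
  fix x assume "x \<in> P"
  have "subgroup P G" and "card P = p ^ multiplicity p (order G)" using assms unfolding Syl_def by auto
  then have "x [^] p ^ multiplicity p (order G) = \<one>"
    using \<open>x \<in> P\<close> pow_card_subgroup_eq_one by metis
  then show "x \<in> p_elements G p"
    using \<open>x \<in> P\<close> subgroup.subset[OF \<open>subgroup P G\<close>] unfolding p_elements_def by blast
qed

lemma not_prime_dvd_index_Syl:
  assumes "finite (carrier G)" and "Factorial_Ring.prime p" and "Q \<in> Syl G p"
    and "subgroup H G" and "Q \<subseteq> H"
  shows "\<not> p dvd card (rcosets\<^bsub>G\<lparr>carrier := H\<rparr>\<^esub> Q)"
proof
  assume "p dvd card (rcosets\<^bsub>G\<lparr>carrier := H\<rparr>\<^esub> Q)"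
  interpret H: group "G\<lparr>carrier := H\<rparr>" using subgroup_imp_group[OF assms(4)] .
  have "subgroup Q (G\<lparr>carrier := H\<rparr>)"
    using subgroup_incl[OF _ assms(4,5)] assms(3) unfolding Syl_def by blast
  then have "card (rcosets\<^bsub>G\<lparr>carrier := H\<rparr>\<^esub> Q) * card Q = card H"
    using H.lagrange by (simp add: order_def)
  moreover have "card (rcosets H) * card H = order G" using lagrange[OF assms(4)] .
  moreover have "card Q = p ^ multiplicity p (order G)" using assms(3) unfolding Syl_def by blast
  ultimately have "p ^ Suc (multiplicity p (order G)) dvd order G"
    using \<open>p dvd _\<close> by (metis mult.commute mult_dvd_mono power_Suc dvd_mult2 dvd_refl)
  moreover have "order G \<noteq> 0" using assms(1) by (simp add: order_gt_0_iff_finite[symmetric])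
  ultimately show False
    using power_dvd_iff_le_multiplicity assms(2) by (metis Suc_n_not_le_n not_prime_unit)
qed

lemma Syl_eq_if_normalizes:
  assumes "finite (carrier G)" and "Factorial_Ring.prime p" and "P \<in> Syl G p" and "Q \<in> Syl G p"
    and "\<forall>g \<in> P. g <# Q #> inv g = Q"
  shows "P = Q"
proof -
  define N where "N = normalizer G Q"
  have PG: "subgroup P G" and QG: "subgroup Q G" and card_PQ: "card P = card Q"
    using assms(3,4) unfolding Syl_def by auto
  have NG: "subgroup N G" unfolding N_def using normalizer_imp_subgroup subgroup.subset[OF QG] by blast
  have QN: "Q \<lhd> G\<lparr>carrier := N\<rparr>" unfolding N_def by (rule subgroup_in_normalizer[OF QG])
  have "Q \<subseteq> N" using subgroup.subset[OF normal_imp_subgroup[OF QN]] by simp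
  have "coprime (card P) (card (rcosets\<^bsub>G\<lparr>carrier := N\<rparr>\<^esub> Q))"
    using not_prime_dvd_index_Syl[OF assms(1,2,4) NG \<open>Q \<subseteq> N\<close>] assms(2,3)
    unfolding Syl_def by (simp add: coprime_commute prime_imp_coprime)
  have "P \<subseteq> Q"
  proof
    fix x assume "x \<in> P"
    then have "x \<in> N"
      using assms(5) subgroup.subset[OF PG] subgroup.subset[OF QG]
      unfolding N_def normalizer_def stabilizer_def by auto
    moreover have "x [^]\<^bsub>G\<lparr>carrier := N\<rparr>\<^esub> card P = \<one>\<^bsub>G\<lparr>carrier := N\<rparr>\<^esub>"
      using pow_card_subgroup_eq_one[OF PG \<open>x \<in> P\<close>] \<open>x \<in> N\<close> nat_pow_consistent by simp
    ultimately show "x \<in> Q"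
      using normal.mem_if_pow_eq_one_coprime_index[OF QN] \<open>coprime _ _\<close> by simp
  qed
  moreover have "finite Q" using assms(1) subgroup.subset[OF QG] finite_subset by blast
  ultimately show "P = Q" using card_PQ card_subset_eq by blast
qed

lemma conj_subgroup_self:
  assumes "subgroup H G" and "g \<in> H"
  shows "g <# H #> inv g = H"
  using assms coset_join3 coset_join2 subgroup.mem_carrier subgroup.m_inv_closed inv_closed
  by metis

lemma conj_subgroup_inj:
  assumes "subgroup H G" and "subgroup K G" and "g \<in> carrier G"
    and "g <# H #> inv g = g <# K #> inv g"
  shows "H = K"
proof -
  interpret conj: group_action G "{H. subgroup H G}"
      "\<lambda>g. \<lambda>H \<in> {H. subgroup H G}. g <# H #> inv g"
    by (rule action_by_conjugation_on_subgroups_set)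
  show ?thesis using conj.inj_prop[OF assms(3)] assms(1,2,4) unfolding inj_on_def by simp
qed

lemma other_Syl_if_not_normal:
  assumes "P \<in> Syl G p" and "\<not> P \<lhd> G"
  obtains Q where "Q \<in> Syl G p" and "Q \<noteq> P"
proof -
  have "subgroup P G" using assms(1) unfolding Syl_def by blast
  then obtain x h where x: "x \<in> carrier G" and "h \<in> P" and "x \<otimes> h \<otimes> inv x \<notin> P"
    using assms(2) normal_inv_iff by blast
  have "x \<otimes> h \<otimes> inv x \<in> x <# P #> inv x"
    unfolding l_coset_def r_coset_def using \<open>h \<in> P\<close> by blast
  then show ?thesis
    using that[OF conj_Syl[OF assms(1) x]] \<open>x \<otimes> h \<otimes> inv x \<notin> P\<close> by blast
qed

lemma conj_orbit_Syl_subset: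
  assumes "P \<in> Syl G p" and "Q \<in> Syl G p" and "Q \<noteq> P"
  shows "orbit (G\<lparr>carrier := P\<rparr>) (\<lambda>g. \<lambda>H \<in> {H. subgroup H G}. g <# H #> inv g) Q
           \<subseteq> Syl G p - {P}"
proof
  fix R assume "R \<in> orbit (G\<lparr>carrier := P\<rparr>) (\<lambda>g. \<lambda>H \<in> {H. subgroup H G}. g <# H #> inv g) Q"
  moreover have PG: "subgroup P G" and QG: "subgroup Q G"
    using assms(1,2) unfolding Syl_def by auto
  ultimately obtain g where "g \<in> P" and R: "R = g <# Q #> inv g" unfolding orbit_def by auto
  have g: "g \<in> carrier G" using \<open>g \<in> P\<close> subgroup.subset[OF PG] by blast
  have "g <# Q #> inv g \<noteq> g <# P #> inv g"
    using conj_subgroup_inj[OF QG PG g] assms(3) by blast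
  then show "R \<in> Syl G p - {P}"
    using R conj_Syl[OF assms(2) g] conj_subgroup_self[OF PG \<open>g \<in> P\<close>] by simp
qed

lemma card_Syl_gt_prime_if_not_normal:
  assumes "finite (carrier G)" and "Factorial_Ring.prime p" and P: "P \<in> Syl G p"
    and "\<not> P \<lhd> G"
  shows "p < card (Syl G p)"
proof (rule ccontr)
  assume "\<not> p < card (Syl G p)"
  obtain Q where Q: "Q \<in> Syl G p" and "Q \<noteq> P" using other_Syl_if_not_normal[OF P assms(4)] .
  have PG: "subgroup P G" and QG: "subgroup Q G" using P Q unfolding Syl_def by auto
  let ?\<phi> = "\<lambda>g. \<lambda>H \<in> {H. subgroup H G}. g <# H #> inv g"
  interpret conj_P: group_action "G\<lparr>carrier := P\<rparr>" "{H. subgroup H G}" ?\<phi>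
    by (rule group_action.induced_action[OF action_by_conjugation_on_subgroups_set PG])
  have "card (orbit (G\<lparr>carrier := P\<rparr>) ?\<phi> Q) \<le> card (Syl G p - {P})"
    using conj_orbit_Syl_subset[OF P Q \<open>Q \<noteq> P\<close>]
    by (rule card_mono[rotated]) (simp add: finite_Syl[OF assms(1)])
  also have "\<dots> < p"
    using card_Diff1_less[OF finite_Syl[OF assms(1)] P] \<open>\<not> p < card (Syl G p)\<close> by linarith
  finally have small_orbit: "card (orbit (G\<lparr>carrier := P\<rparr>) ?\<phi> Q) < p" .
  have "order (G\<lparr>carrier := P\<rparr>) = p ^ multiplicity p (order G)"
    using P by (simp add: order_def Syl_def)
  then have "?\<phi> g Q = Q" if "g \<in> P" for g
    using conj_P.fixed_if_card_orbit_less_prime[OF assms(2) _ _ small_orbit] QG that by simp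
  then have "\<forall>g \<in> P. g <# Q #> inv g = Q" using QG by simp
  then have "P = Q" by (rule Syl_eq_if_normalizes[OF assms(1,2) P Q])
  with \<open>Q \<noteq> P\<close> show False by simp
qed

lemma card_Int_Syl_mult_prime_le:
  assumes "finite (carrier G)" and "Factorial_Ring.prime p"
    and "Q \<in> Syl G p" and "R \<in> Syl G p" and "Q \<noteq> R"
  shows "card (Q \<inter> R) * p \<le> card Q"
proof -
  define a where "a = multiplicity p (order G)"
  have QG: "subgroup Q G" and RG: "subgroup R G" and card_Q: "card Q = p ^ a" and card_R: "card R = p ^ a"
    using assms(3,4) unfolding Syl_def a_def by auto
  have fin_Q: "finite Q" and fin_R: "finite R"
    using assms(1) subgroup.subset[OF QG] subgroup.subset[OF RG] finite_subset by blast+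
  interpret Q: group "G\<lparr>carrier := Q\<rparr>" using subgroup_imp_group[OF QG] .
  have "subgroup (Q \<inter> R) (G\<lparr>carrier := Q\<rparr>)"
    by (rule subgroup_incl[OF subgroups_Inter_pair[OF QG RG] QG]) blast
  then have "card (rcosets\<^bsub>G\<lparr>carrier := Q\<rparr>\<^esub> (Q \<inter> R)) * card (Q \<inter> R) = p ^ a"
    using Q.lagrange card_Q by (simp add: order_def)
  then have "card (Q \<inter> R) dvd p ^ a" by (metis dvd_triv_right)
  then obtain m where "m \<le> a" and card_QR: "card (Q \<inter> R) = p ^ m"
    using divides_primepow_nat[OF assms(2)] by blast
  have "m \<noteq> a"
  proof
    assume "m = a"
    then have "Q \<inter> R = Q" using card_QR card_Q fin_Q by (metis Int_lower1 card_subset_eq)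
    then have "Q \<subseteq> R" by blast
    then have "Q = R" using card_Q card_R fin_R card_subset_eq by metis
    with \<open>Q \<noteq> R\<close> show False ..
  qed
  with \<open>m \<le> a\<close> have "Suc m \<le> a" by simp
  then have "p ^ m * p \<le> p ^ a"
    using power_increasing[of "Suc m" a p] prime_gt_0_nat[OF assms(2)] by (simp add: mult.commute)
  then show ?thesis using card_QR card_Q by simp
qed

lemma Syl_not_subset_Union:
  assumes "finite (carrier G)" and "Factorial_Ring.prime p"
    and "Q \<in> Syl G p" and "S \<subseteq> Syl G p - {Q}" and "card S \<le> p"
  shows "\<not> Q \<subseteq> \<Union>S"
proof
  assume cover: "Q \<subseteq> \<Union>S"
  have QG: "subgroup Q G" using assms(3) unfolding Syl_def by blast
  have fin_Q: "finite Q" using assms(1) subgroup.subset[OF QG] finite_subset by blast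
  have fin_S: "finite S" using finite_Syl[OF assms(1)] assms(4) finite_subset by blast
  have one_Int: "\<one> \<in> Q \<inter> R" if "R \<in> S" for R
    using that assms(4) subgroup.one_closed QG unfolding Syl_def by blast
  have Int_small: "card (Q \<inter> R) * p \<le> card Q" if "R \<in> S" for R
    using card_Int_Syl_mult_prime_le[OF assms(1-3)] that assms(4) by blast
  obtain R where "R \<in> S" using cover subgroup.one_closed[OF QG] by blast
  then have "card (Q \<inter> R) \<noteq> 0" using one_Int[OF \<open>R \<in> S\<close>] fin_Q by (simp add: card_eq_0_iff) blast
  then have "p \<le> card Q"
    using Int_small[OF \<open>R \<in> S\<close>] mult_le_mono1[of 1 "card (Q \<inter> R)" p] by linarith
  have Q_minus_one: "Q - {\<one>} = (\<Union>R\<in>S. Q \<inter> R - {\<one>})" using cover by blast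
  have "card Q - 1 = card (Q - {\<one>})"
    using fin_Q subgroup.one_closed[OF QG] by (simp add: card_Diff_singleton)
  also have "\<dots> = card (\<Union>R\<in>S. Q \<inter> R - {\<one>})" by (rule arg_cong[OF Q_minus_one])
  also have "\<dots> \<le> (\<Sum>R\<in>S. card (Q \<inter> R - {\<one>}))" by (rule card_UN_le[OF fin_S])
  also have "\<dots> = (\<Sum>R\<in>S. card (Q \<inter> R) - 1)"
    using fin_Q one_Int by (intro sum.cong) (simp_all add: card_Diff_singleton)
  finally have "p * (card Q - 1) \<le> (\<Sum>R\<in>S. p * (card (Q \<inter> R) - 1))"
    by (simp add: sum_distrib_left[symmetric])
  also have "\<dots> \<le> (\<Sum>R\<in>S. card Q - p)"
  proof (rule sum_mono)
    fix R assume "R \<in> S"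
    then show "p * (card (Q \<inter> R) - 1) \<le> card Q - p"
      using Int_small[of R] by (simp add: right_diff_distrib' mult.commute)
  qed
  also have "\<dots> \<le> p * (card Q - p)" using assms(5) by simp
  finally have "p * card Q - p \<le> p * card Q - p * p" by (simp add: right_diff_distrib')
  moreover have "p * p \<le> p * card Q" using \<open>p \<le> card Q\<close> by simp
  moreover have "p < p * p" using prime_gt_1_nat[OF assms(2)] by simp
  ultimately show False by linarith
qed

end


theorem theorem8p2:
  fixes G :: "('a, 'b) monoid_scheme" and p :: nat
  assumes "group G" and "finite (carrier G)" and "Factorial_Ring.prime p"
    and "\<forall>P \<in> Syl G p. \<not> P \<lhd> G"
  shows "(\<nexists>S. S \<subseteq> Syl G p \<and> card S \<le> p \<and> p_elements G p \<subseteq> \<Union>S)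
         \<and> (nu G p = p + 1 \<longrightarrow> \<not> has_redundant_sylow G p)"
proof -
  interpret group G by (rule assms(1))
  obtain P where "P \<in> Syl G p" using Syl_nonempty[OF assms(2,3)] by blast
  with assms(4) have many: "p < card (Syl G p)"
    by (simp add: card_Syl_gt_prime_if_not_normal[OF assms(2,3)])
  have no_cover: "\<not> p_elements G p \<subseteq> \<Union>S" if "S \<subseteq> Syl G p" and "card S \<le> p" for S
  proof -
    have "\<not> Syl G p \<subseteq> S"
    proof
      assume "Syl G p \<subseteq> S"
      then have "card (Syl G p) \<le> card S"
        by (rule card_mono[OF finite_subset[OF that(1) finite_Syl[OF assms(2)]]])
      with that(2) many show False by linarith
    qed
    then obtain Q where "Q \<in> Syl G p - S" by blast
    then show ?thesis
      using Syl_not_subset_Union[OF assms(2,3), of Q S] Syl_subset_p_elements that by blast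
  qed
  moreover have "card S \<le> p" if "S \<subset> Syl G p" and "nu G p = p + 1" for S
    using psubset_card_mono[OF finite_Syl[OF assms(2)] that(1)] that(2) unfolding nu_def by simp
  ultimately show ?thesis unfolding has_redundant_sylow_def by blast
qed

end
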